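(* Let $n$ be a positive integer and $S\subseteq\mathbb{Z}_n$ nonempty with $0\notin S$ and $S=-S$. A subset $C$ of $\mathbb{Z}_n$ is a total perfect code in $\mathrm{Cay}(\mathbb{Z}_n,S)$ if and only if there exists $q(x)\in\mathbb{Z}[x]$ such that $$f_C(x)\, f_{S}(x) = (x^n-1)\,q(x) + (x^{n-1}+\cdots+x+1).$$
   Context: Elements of $\mathbb{Z}_n$ are identified with integers in $\{0,1,\dots,n-1\}$. For a nonempty finite set $A$ of nonnegative integers, $f_A(x)=\sum_{a\in A}x^a$. The circulant graph $\mathrm{Cay}(\mathbb{Z}_n,S)$ has vertex set $\mathbb{Z}_n$ with $u,v$ adjacent iff $v-u\in S$. A total perfect code in a graph $\Gamma=(V,E)$ is a subset $C\subseteq V$ such that every vertex of $V$ has exactly one neighbour in $C$. *)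

theory Defs
  imports "HOL-Computational_Algebra.Polynomial"
begin

(* Z_n is modelled by {0..<n} :: nat set, with arithmetic mod n. *)

definition zneg :: "nat \<Rightarrow> nat \<Rightarrow> nat" where
  "zneg n a = (n - a mod n) mod n"

definition fpoly :: "nat set \<Rightarrow> int poly" where
  "fpoly A = (\<Sum>a\<in>A. monom 1 a)"

definition cay_adj :: "nat \<Rightarrow> nat set \<Rightarrow> nat \<Rightarrow> nat \<Rightarrow> bool" where
  "cay_adj n S u v \<longleftrightarrow> u < n \<and> v < n \<and> (v + n - u) mod n \<in> S"

definition total_perfect_code :: "nat \<Rightarrow> nat set \<Rightarrow> nat set \<Rightarrow> bool" where
  "total_perfect_code n S C \<longleftrightarrow> C \<subseteq> {0..<n} \<and>
     (\<forall>v\<in>{0..<n}. \<exists>!c. c \<in> C \<and> cay_adj n S v c)"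

end

theory Submission
  imports Defs
begin

text \<open>Modulo \<open>x\<^sup>n - 1\<close> the product \<open>f\<^sub>C f\<^sub>S\<close> reduces to the sum of
  \<open>x\<^bsup>(c + s) mod n\<^esup>\<close> over \<open>c \<in> C\<close>, \<open>s \<in> S\<close>, a polynomial of degree \<open>< n\<close>.
  Hence the congruence holds iff this reduction equals \<open>1 + x + \<dots> + x\<^bsup>n-1\<^esup>\<close>,
  i.e. iff every \<open>v\<close> is \<open>c + s\<close> for exactly one \<open>c \<in> C\<close>, \<open>s \<in> S\<close>. Since
  \<open>S = -S\<close>, \<open>v - c \<in> S\<close> says exactly that \<open>c\<close> is a neighbour of \<open>v\<close>.\<close>

lemma add_mod_eq_iff:
  assumes "(a::nat) < n" "b < n" "v < n"
  shows "(a + b) mod n = v \<longleftrightarrow> b = (v + n - a) mod n"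
  using assms by (cases "a + b < n"; cases "v < a") (auto simp: le_mod_geq)

lemma zneg_diff_mod:
  assumes "(u::nat) < n" "v < n"
  shows "zneg n ((v + n - u) mod n) = (u + n - v) mod n"
  using assms by (cases "u < v"; cases "u = v") (auto simp: zneg_def le_mod_geq)

lemma monom_diff_monom_mod_dvd:
  "(monom (1::'a::comm_ring_1) n - 1) dvd (monom 1 k - monom 1 (k mod n))"
proof -
  have "monom (1::'a) k - monom 1 (k mod n) = monom 1 (k mod n) * (monom 1 n ^ (k div n) - 1)"
    by (subst div_mult_mod_eq[of k n, symmetric]) (simp add: monom_power mult_monom algebra_simps)
  then show ?thesis
    by (simp add: power_diff_1_eq)
qed

lemma eq_if_dvd_diff_degree_less:
  fixes p a b :: "'a::idom poly"
  assumes "p dvd a - b" and "degree a < degree p" and "degree b < degree p"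
  shows "a = b"
proof (rule ccontr)
  assume "a \<noteq> b"
  then have "degree p \<le> degree (a - b)"
    using assms(1) by (simp add: dvd_imp_degree_le)
  moreover have "degree (a - b) < degree p"
    using assms(2,3) by (rule degree_diff_less)
  ultimately show False by simp
qed

definition cyclic_product :: "nat \<Rightarrow> nat set \<Rightarrow> nat set \<Rightarrow> int poly" where
  "cyclic_product n A B = (\<Sum>a\<in>A. \<Sum>b\<in>B. monom 1 ((a + b) mod n))"

lemma cyclic_product_congruent:
  "(monom 1 n - 1) dvd fpoly A * fpoly B - cyclic_product n A B"
proof -
  have "fpoly A * fpoly B = (\<Sum>a\<in>A. \<Sum>b\<in>B. monom 1 (a + b))"
    unfolding fpoly_def by (simp add: sum_product mult_monom)
  then show ?thesis
    unfolding cyclic_product_def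
    by (simp add: sum_subtractf[symmetric] dvd_sum monom_diff_monom_mod_dvd)
qed

lemma degree_cyclic_product_less:
  assumes "n > 0"
  shows "degree (cyclic_product n A B) < n"
  unfolding cyclic_product_def using assms
  by (intro degree_sum_less) (auto intro: le_less_trans[OF degree_monom_le])

lemma coeff_cyclic_product:
  assumes "A \<subseteq> {0..<n}" "B \<subseteq> {0..<n}" "v < n"
  shows "coeff (cyclic_product n A B) v = int (card {a\<in>A. (v + n - a) mod n \<in> B})"
proof -
  have fin: "finite A" "finite B"
    using assms(1,2) finite_subset by blast+
  have fiber: "{b\<in>B. (a + b) mod n = v} = {(v + n - a) mod n} \<inter> B" if "a \<in> A" for a
  proof -
    have "{b\<in>B. (a + b) mod n = v} = {b\<in>B. b = (v + n - a) mod n}"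
      using assms that by (intro Collect_cong conj_cong refl add_mod_eq_iff) auto
    then show ?thesis by auto
  qed
  have "coeff (cyclic_product n A B) v = (\<Sum>a\<in>A. \<Sum>b\<in>B. if (a + b) mod n = v then 1 else 0)"
    by (simp add: cyclic_product_def coeff_sum eq_commute)
  also have "\<dots> = (\<Sum>a\<in>A. int (card {b\<in>B. (a + b) mod n = v}))"
    using fin by (simp add: sum.inter_filter[symmetric])
  also have "\<dots> = (\<Sum>a\<in>A. if (v + n - a) mod n \<in> B then 1 else 0)"
    using fin by (intro sum.cong) (auto simp: fiber)
  also have "\<dots> = int (card {a\<in>A. (v + n - a) mod n \<in> B})"
    using fin by (simp add: sum.inter_filter[symmetric])
  finally show ?thesis .
qed

lemma ex_congruence_iff_cyclic_product:
  assumes "n > 0"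
  shows "(\<exists>q. fpoly A * fpoly B = (monom 1 n - 1) * q + (\<Sum>i<n. monom 1 i)) \<longleftrightarrow>
    cyclic_product n A B = (\<Sum>i<n. monom 1 i)"
    (is "(\<exists>q. ?f = ?p * q + ?t) \<longleftrightarrow> ?r = ?t")
proof
  assume "\<exists>q. ?f = ?p * q + ?t"
  then have "?p dvd ?f - ?t"
    by auto
  then have "?p dvd (?f - ?t) - (?f - ?r)"
    using cyclic_product_congruent by (rule dvd_diff)
  moreover have "degree ?p = n"
    using assms degree_add_eq_left[of "-1" "monom 1 n"] by (simp add: degree_monom_eq)
  moreover have "degree ?t < n"
    using assms by (intro degree_sum_less) (auto intro: le_less_trans[OF degree_monom_le])
  ultimately show "?r = ?t"
    using assms degree_cyclic_product_less
    by (intro eq_if_dvd_diff_degree_less[of ?p]) simp_all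
next
  assume "?r = ?t"
  obtain q where "?f - ?r = ?p * q"
    using cyclic_product_congruent by (rule dvdE)
  with \<open>?r = ?t\<close> show "\<exists>q. ?f = ?p * q + ?t"
    by (metis diff_eq_eq)
qed

lemma cyclic_product_eq_iff_card:
  assumes "n > 0" "A \<subseteq> {0..<n}" "B \<subseteq> {0..<n}"
  shows "cyclic_product n A B = (\<Sum>i<n. monom 1 i) \<longleftrightarrow>
    (\<forall>v<n. card {a\<in>A. (v + n - a) mod n \<in> B} = 1)"
proof -
  have "coeff (cyclic_product n A B) v = 0" if "v \<ge> n" for v
    using degree_cyclic_product_less[OF assms(1), of A B] that by (simp add: coeff_eq_0)
  then show ?thesis
    using coeff_cyclic_product[OF assms(2,3)]
    by (auto simp: poly_eq_iff coeff_sum)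
qed

lemma cay_adj_sym:
  assumes "zneg n ` S \<subseteq> S" and "cay_adj n S u v"
  shows "cay_adj n S v u"
proof -
  have "u < n" "v < n" "(v + n - u) mod n \<in> S"
    using assms(2) unfolding cay_adj_def by auto
  then show ?thesis
    using assms(1) zneg_diff_mod[of u n v] unfolding cay_adj_def by (metis image_subset_iff)
qed

lemma cay_adj_iff_diff_mem:
  assumes "zneg n ` S \<subseteq> S" "u < n" "v < n"
  shows "cay_adj n S u v \<longleftrightarrow> (u + n - v) mod n \<in> S"
proof -
  have "cay_adj n S u v \<longleftrightarrow> cay_adj n S v u"
    using assms(1) cay_adj_sym[of n S] by blast
  then show ?thesis
    using assms(2,3) by (auto simp: cay_adj_def)
qed

lemma total_perfect_code_iff_card:
  assumes "C \<subseteq> {0..<n}"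
  shows "total_perfect_code n S C \<longleftrightarrow> (\<forall>v<n. card {c\<in>C. cay_adj n S v c} = 1)"
proof -
  have "(\<exists>!c. c \<in> C \<and> cay_adj n S v c) \<longleftrightarrow> card {c\<in>C. cay_adj n S v c} = 1" for v
    by (simp add: card_1_singleton_iff Ex1_def set_eq_iff) metis
  then show ?thesis
    using assms unfolding total_perfect_code_def by auto
qed

theorem lemma2p4:
  fixes n :: nat and S C :: "nat set"
  assumes "n > 0"
    and "S \<subseteq> {0..<n}" and "S \<noteq> {}" and "0 \<notin> S"
    and "zneg n ` S = S"
    and "C \<subseteq> {0..<n}"
  shows "total_perfect_code n S C \<longleftrightarrow>
    (\<exists>q :: int poly. fpoly C * fpoly S = (monom 1 n - 1) * q + (\<Sum>i<n. monom 1 i))"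
proof -
  have "{c\<in>C. cay_adj n S v c} = {c\<in>C. (v + n - c) mod n \<in> S}" if "v < n" for v
    using assms(5,6) that by (auto simp: cay_adj_iff_diff_mem)
  then show ?thesis
    using assms(1,2,6)
    by (simp add: total_perfect_code_iff_card ex_congruence_iff_cyclic_product
        cyclic_product_eq_iff_card)
qed

end
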